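(* Let $\mathbb{L}=(\mathcal{P},\mathcal{C},\parallel)$ be a Laguerre plane satisfying axioms (C) and (S). Then $\mathbb{L}$ satisfies the following condition $(\Pi)$: let $a,b,c,x$ be pairwise non-parallel points with $x\notin(a,b,c)^{\circ}$, and let $p,q$ be points such that $p\parallel c$, $p\in(a,b,x)^{\circ}$, $q\parallel b$, $q\in(a,c,x)^{\circ}$; if $K$ is a circle containing $x$ which is tangent to $(a,b,c)^{\circ}$ at $a$, then $K\cap(p,q,x)^{\circ}=\{x\}$.
   Context: A Laguerre plane is a triple $(\mathcal{P},\mathcal{C},\parallel)$ where $\mathcal{P}$ is a set of points, $\mathcal{C}\subset 2^{\mathcal{P}}$ a set of circles and $\parallel$ an equivalence relation on $\mathcal{P}$ (parallelism; its classes are called generators) such that: (1) any three pairwise non-parallel points $a,b,c$ lie on a unique circle, denoted $(a,b,c)^{\circ}$; (2) for every circle $K$ and non-parallel points $p\in K$, $q\notin K$ there is exactly one circle $L$ with $q\in L$ and $K\cap L=\{p\}$; (3) for every point $p$ and circle $K$ there is exactly one point $q\in K$ with $q\parallel p$; (4) some circle contains at least three but not all points. Circles $K,L$ are tangent at $p$ if $K\cap L=\{p\}$ or $K=L$ (with $p\in K$). For $p\in K$, $\langle p,K\rangle$ denotes the set of circles tangent to $K$ at $p$. Axiom (C): for any circles $K,L$ and any point $p\in K\setminus L$ there exists exactly one circle $M\in\langle p,K\rangle$ with $|M\cap L|=1$. Axiom (S): if $K,L,M,N$ are circles and $a,b,c,d$ points with $K\cap L=\{a\}$, $L\cap M=\{b\}$,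 $M\cap N=\{c\}$, $N\cap K=\{d\}$ and $a\nparallel c$, then there is a circle containing $a,b,c,d$. *)

theory Defs
  imports Main
begin

text \<open>Points are the elements of the type 'p (the point set P is UNIV);
  circles form a set C of point sets; par is the parallelism relation.\<close>

definition circ :: "'p set set \<Rightarrow> 'p \<Rightarrow> 'p \<Rightarrow> 'p \<Rightarrow> 'p set" where
  "circ C a b c = (THE K. K \<in> C \<and> a \<in> K \<and> b \<in> K \<and> c \<in> K)"

definition tangent_at :: "'p set set \<Rightarrow> 'p set \<Rightarrow> 'p set \<Rightarrow> 'p \<Rightarrow> bool" where
  "tangent_at C K L p \<longleftrightarrow> K \<in> C \<and> L \<in> C \<and> p \<in> K \<and> (K \<inter> L = {p} \<or> K = L)"

definition pencil :: "'p set set \<Rightarrow> 'p \<Rightarrow> 'p set \<Rightarrow> 'p set set" where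
  "pencil C p K = {M \<in> C. tangent_at C M K p}"

definition laguerre_plane :: "'p set set \<Rightarrow> ('p \<Rightarrow> 'p \<Rightarrow> bool) \<Rightarrow> bool" where
  "laguerre_plane C par \<longleftrightarrow>
     equivp par \<and>
     (\<forall>a b c. \<not> par a b \<and> \<not> par b c \<and> \<not> par a c \<longrightarrow>
        (\<exists>!K. K \<in> C \<and> a \<in> K \<and> b \<in> K \<and> c \<in> K)) \<and>
     (\<forall>K\<in>C. \<forall>p q. p \<in> K \<and> q \<notin> K \<and> \<not> par p q \<longrightarrow>
        (\<exists>!L. L \<in> C \<and> q \<in> L \<and> K \<inter> L = {p})) \<and>
     (\<forall>p. \<forall>K\<in>C. \<exists>!q. q \<in> K \<and> par q p) \<and>
     (\<exists>K\<in>C. (\<exists>a b c. a \<in> K \<and> b \<in> K \<and> c \<in> K \<and> a \<noteq> b \<and> b \<noteq> c \<and> a \<noteq> c)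
            \<and> K \<noteq> UNIV)"

definition axiom_C :: "'p set set \<Rightarrow> bool" where
  "axiom_C C \<longleftrightarrow>
     (\<forall>K\<in>C. \<forall>L\<in>C. \<forall>p. p \<in> K \<and> p \<notin> L \<longrightarrow>
        (\<exists>!M. M \<in> pencil C p K \<and> (\<exists>y. M \<inter> L = {y})))"

definition axiom_S :: "'p set set \<Rightarrow> ('p \<Rightarrow> 'p \<Rightarrow> bool) \<Rightarrow> bool" where
  "axiom_S C par \<longleftrightarrow>
     (\<forall>K\<in>C. \<forall>L\<in>C. \<forall>M\<in>C. \<forall>N\<in>C. \<forall>a b c d.
        K \<inter> L = {a} \<and> L \<inter> M = {b} \<and> M \<inter> N = {c} \<and> N \<inter> K = {d} \<and> \<not> par a c
        \<longrightarrow> (\<exists>Z\<in>C. a \<in> Z \<and> b \<in> Z \<and> c \<in> Z \<and> d \<in> Z))"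

end

theory Submission
  imports Defs
begin

text \<open>Let \<open>A = (a,b,c)\<degree>\<close> and let \<open>D\<close> be the circle through \<open>p\<close> touching \<open>K\<close> at \<open>x\<close>;
  it suffices to show that \<open>D\<close> passes through \<open>q\<close>. By axiom (C), \<open>D\<close> does not touch \<open>A\<close>,
  so every point \<open>u\<close> of \<open>D\<close> off \<open>A\<close> carries a circle \<open>M\<^sub>u\<close> touching \<open>D\<close> at \<open>u\<close> and \<open>A\<close>
  at some \<open>y\<^sub>u\<close>, and axiom (S) applied to the closed chain \<open>A, K, D, M\<^sub>u\<close> puts \<open>a, x, u, y\<^sub>u\<close> on
  one circle. For \<open>u = p\<close> this circle is \<open>(a,b,x)\<degree>\<close>, whence \<open>y\<^sub>p = b\<close>. For the point \<open>u\<close> of \<open>D\<close>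
  parallel to \<open>b\<close>, axiom (S) applied to the chain \<open>M\<^sub>p, D, M\<^sub>u, A\<close> forces \<open>y\<^sub>u \<parallel> p \<parallel> c\<close>,
  so \<open>y\<^sub>u = c\<close> and \<open>u\<close> lies on \<open>(a,c,x)\<degree>\<close>; being parallel to \<open>b\<close>, it is \<open>q\<close>.\<close>

locale laguerre =
  fixes C :: "'p set set" and par :: "'p \<Rightarrow> 'p \<Rightarrow> bool"
  assumes laguerre_plane: "laguerre_plane C par"
begin

lemma equivp_par: "equivp par"
  using laguerre_plane unfolding laguerre_plane_def by (elim conjE)

lemma par_refl [simp]: "par u u"
  using equivp_par by (rule equivp_reflp)

lemma par_commute: "par u v \<longleftrightarrow> par v u"
  using equivp_par by (meson equivp_symp)

lemma par_trans: "par u v \<Longrightarrow> par v w \<Longrightarrow> par u w"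
  using equivp_par by (rule equivp_transp)

lemma ex1_circle_through:
  assumes "\<not> par a b" "\<not> par b c" "\<not> par a c"
  shows "\<exists>!K. K \<in> C \<and> a \<in> K \<and> b \<in> K \<and> c \<in> K"
proof -
  have "\<forall>a b c. \<not> par a b \<and> \<not> par b c \<and> \<not> par a c \<longrightarrow> (\<exists>!K. K \<in> C \<and> a \<in> K \<and> b \<in> K \<and> c \<in> K)"
    using laguerre_plane unfolding laguerre_plane_def by (elim conjE)
  then show ?thesis
    using assms by simp
qed

lemma ex_touching_circle:
  assumes "K \<in> C" "u \<in> K" "v \<notin> K" "\<not> par u v"
  obtains L where "L \<in> C" "v \<in> L" "K \<inter> L = {u}"
proof -
  have "\<forall>K\<in>C. \<forall>u v. u \<in> K \<and> v \<notin> K \<and> \<not> par u v \<longrightarrow> (\<exists>!L. L \<in> C \<and> v \<in> L \<and> K \<inter> L = {u})"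
    using laguerre_plane unfolding laguerre_plane_def by (elim conjE)
  then have "\<exists>!L. L \<in> C \<and> v \<in> L \<and> K \<inter> L = {u}"
    using assms by simp
  then show thesis
    using that by (auto dest: ex1_implies_ex)
qed

lemma ex1_par_on_circle:
  assumes "K \<in> C"
  shows "\<exists>!v. v \<in> K \<and> par v u"
proof -
  have "\<forall>u. \<forall>K\<in>C. \<exists>!v. v \<in> K \<and> par v u"
    using laguerre_plane unfolding laguerre_plane_def by (elim conjE)
  then show ?thesis
    using assms by simp
qed

lemma ex_par_on_circle:
  assumes "K \<in> C"
  obtains v where "v \<in> K" "par v u"
  using ex1_par_on_circle[OF assms] by blast

lemma par_on_circle_eq:
  assumes "K \<in> C" "u \<in> K" "v \<in> K" "par u v"
  shows "u = v"
  using ex1_par_on_circle[OF assms(1), of v] assms(2-4) par_refl by blast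

lemma circ_through:
  assumes "\<not> par a b" "\<not> par b c" "\<not> par a c"
  shows "circ C a b c \<in> C" "a \<in> circ C a b c" "b \<in> circ C a b c" "c \<in> circ C a b c"
  using theI'[OF ex1_circle_through[OF assms]] unfolding circ_def by auto

lemma circ_unique:
  assumes "\<not> par a b" "\<not> par b c" "\<not> par a c" "Z \<in> C" "a \<in> Z" "b \<in> Z" "c \<in> Z"
  shows "Z = circ C a b c"
  unfolding circ_def using assms by (intro the1_equality[symmetric] ex1_circle_through) auto

lemma circle_eq_three_points:
  assumes "Z \<in> C" "W \<in> C" "u \<in> Z" "v \<in> Z" "w \<in> Z" "u \<in> W" "v \<in> W" "w \<in> W"
    and "u \<noteq> v" "v \<noteq> w" "u \<noteq> w"
  shows "Z = W"
proof -
  have n: "\<not> par u v" "\<not> par v w" "\<not> par u w"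
    using par_on_circle_eq assms(1,3-5,9-11) by blast+
  have "Z = circ C u v w"
    by (rule circ_unique[OF n assms(1,3-5)])
  also have "\<dots> = W"
    by (rule circ_unique[OF n assms(2,6-8), symmetric])
  finally show ?thesis .
qed

end

locale laguerre_C = laguerre +
  assumes axiom_C: "axiom_C C"
begin

lemma pencil_iff: "M \<in> pencil C u K \<longleftrightarrow> M \<in> C \<and> K \<in> C \<and> u \<in> M \<and> (M \<inter> K = {u} \<or> M = K)"
  unfolding pencil_def tangent_at_def by blast

lemma ex1_pencil_touching:
  assumes "K \<in> C" "L \<in> C" "u \<in> K" "u \<notin> L"
  shows "\<exists>!M. M \<in> pencil C u K \<and> (\<exists>y. M \<inter> L = {y})"
  using axiom_C assms unfolding axiom_C_def by simp

lemma ex_pencil_touching: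
  assumes "K \<in> C" "L \<in> C" "u \<in> K" "u \<notin> L"
  obtains M y where "M \<in> pencil C u K" "M \<inter> L = {y}"
  using ex1_pencil_touching[OF assms] by blast

lemma pencil_touching_unique:
  assumes "K \<in> C" "L \<in> C" "u \<in> K" "u \<notin> L"
    and "M \<in> pencil C u K" "M \<inter> L = {y}" "M' \<in> pencil C u K" "M' \<inter> L = {y'}"
  shows "M = M'"
  using ex1_pencil_touching[OF assms(1-4)] assms(5-8) by blast

text \<open>\<open>A\<close> itself lies in its pencil at \<open>a\<close>, so by axiom (C) it cannot touch \<open>D\<close> as well.\<close>

lemma not_touching_if_pencil_touches:
  assumes "K \<in> pencil C a A" "K \<noteq> A" "D \<in> C" "a \<notin> D" "K \<inter> D = {x}"
  shows "\<nexists>y. A \<inter> D = {y}"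
proof
  assume "\<exists>y. A \<inter> D = {y}"
  moreover have "A \<in> C" "a \<in> A" "A \<in> pencil C a A"
    using assms(1) by (auto simp: pencil_iff)
  ultimately have "K = A"
    using pencil_touching_unique assms by blast
  with assms(2) show False ..
qed

end

locale laguerre_S = laguerre +
  assumes axiom_S: "axiom_S C par"
begin

lemma touching_chain_concyclic:
  assumes "K \<in> C" "L \<in> C" "M \<in> C" "N \<in> C"
    and "K \<inter> L = {a}" "L \<inter> M = {b}" "M \<inter> N = {c}" "N \<inter> K = {d}" "\<not> par a c"
  shows "\<exists>Z\<in>C. a \<in> Z \<and> b \<in> Z \<and> c \<in> Z \<and> d \<in> Z"
  using axiom_S assms unfolding axiom_S_def by simp

text \<open>Otherwise \<open>p, q, y, b\<close> would be concyclic, with \<open>q \<parallel> b\<close> and \<open>q \<noteq> b\<close>.\<close>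

lemma touching_chain_par:
  assumes "M \<in> C" "D \<in> C" "M' \<in> C" "A \<in> C"
    and "M \<inter> D = {p}" "D \<inter> M' = {q}" "M' \<inter> A = {y}" "A \<inter> M = {b}"
    and "par q b" "q \<noteq> b"
  shows "par p y"
  using touching_chain_concyclic[OF assms(1-8)] par_on_circle_eq assms(9,10) by blast

end

locale laguerre_CS = laguerre_C + laguerre_S
begin

lemma pencil_touching_concyclic:
  assumes "K \<in> pencil C a A" "x \<in> K" "x \<notin> A" "D \<in> C" "K \<inter> D = {x}" "a \<notin> D"
    and "u \<in> D" "u \<notin> A" "u \<noteq> x" "\<not> par a u"
  obtains M y where "M \<in> C" "M \<inter> D = {u}" "M \<inter> A = {y}" "y \<noteq> a"
    and "\<exists>Z\<in>C. a \<in> Z \<and> x \<in> Z \<and> u \<in> Z \<and> y \<in> Z"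
proof -
  have K: "K \<in> C" "A \<in> C" "a \<in> A" "K \<inter> A = {a}" "K \<noteq> A"
    using assms(1-3) by (auto simp: pencil_iff)
  obtain M y where M: "M \<in> pencil C u D" "M \<inter> A = {y}"
    using ex_pencil_touching assms(4) K(2) assms(7,8) .
  have "\<nexists>y. A \<inter> D = {y}"
    using not_touching_if_pencil_touches assms(1) K(5) assms(4,6,5) .
  with M have MD: "M \<in> C" "M \<inter> D = {u}"
    by (auto simp: pencil_iff Int_commute)
  have "y \<noteq> a"
  proof
    assume "y = a"
    with M MD K have "M \<in> pencil C a A"
      by (auto simp: pencil_iff)
    then have "M = K"
      using pencil_touching_unique[OF K(2) assms(4) K(3) assms(6)] assms(1,5) MD(2) by blast
    with MD(2) assms(5,9) show False
      by blast
  qed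
  moreover have "\<exists>Z\<in>C. a \<in> Z \<and> x \<in> Z \<and> u \<in> Z \<and> y \<in> Z"
    using touching_chain_concyclic[OF K(2,1) assms(4) MD(1)] K(4) assms(5,10) MD(2) M(2)
    by (simp add: Int_commute)
  ultimately show thesis
    using that MD M(2) by blast
qed

context
  fixes a b c x p K
  assumes ab: "\<not> par a b" and ac: "\<not> par a c" and ax: "\<not> par a x"
    and bc: "\<not> par b c" and bx: "\<not> par b x" and cx: "\<not> par c x"
    and x_notin_abc: "x \<notin> circ C a b c"
    and pc: "par p c" and p_on_abx: "p \<in> circ C a b x"
    and K: "K \<in> C" and xK: "x \<in> K" and K_pencil: "K \<in> pencil C a (circ C a b c)"
begin

lemma p_not_par: "\<not> par a p" "\<not> par b p" "\<not> par x p"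
  using ac bc cx pc par_trans par_commute by metis+

lemma p_notin_K: "p \<notin> K"
proof
  assume "p \<in> K"
  have "a \<in> K" "K \<inter> circ C a b c = {a}"
    using K_pencil x_notin_abc xK by (auto simp: pencil_iff)
  have "a \<noteq> p" "p \<noteq> x" "a \<noteq> x"
    using p_not_par ax by auto
  then have "K = circ C a b x"
    using circle_eq_three_points[OF K circ_through(1)[OF ab bx ax] \<open>a \<in> K\<close> xK \<open>p \<in> K\<close>]
      circ_through(2,4)[OF ab bx ax] p_on_abx by blast
  then have "b \<in> K \<inter> circ C a b c"
    using circ_through(3)[OF ab bx ax] circ_through(3)[OF ab bc ac] by simp
  with \<open>K \<inter> circ C a b c = {a}\<close> ab show False
    by auto
qed

lemma p_notin_abc: "p \<notin> circ C a b c"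
proof
  assume "p \<in> circ C a b c"
  then have "p = c"
    using par_on_circle_eq circ_through[OF ab bc ac] pc by blast
  then have "circ C a b x = circ C a b c"
    using circle_eq_three_points[OF circ_through(1)[OF ab bx ax] circ_through(1)[OF ab bc ac]]
      circ_through[OF ab bx ax] circ_through[OF ab bc ac] p_on_abx ab bc ac
    by (metis par_refl)
  then show False
    using circ_through(4)[OF ab bx ax] x_notin_abc by simp
qed

context
  fixes D
  assumes D: "D \<in> C" and pD: "p \<in> D" and KD: "K \<inter> D = {x}"
begin

lemma a_notin_D: "a \<notin> D"
proof
  assume "a \<in> D"
  moreover have "a \<in> K"
    using K_pencil by (simp add: pencil_iff)
  ultimately have "a = x"
    using KD by blast
  with ax show False
    by simp
qed

lemma ex_touching_at_p_and_b:
  obtains M where "M \<in> C" "M \<inter> D = {p}" "M \<inter> circ C a b c = {b}"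
proof -
  have ap: "\<not> par a p" and "p \<noteq> x" "a \<noteq> p" "a \<noteq> x"
    using p_not_par ax by auto
  obtain M y where M: "M \<in> C" "M \<inter> D = {p}" "M \<inter> circ C a b c = {y}" "y \<noteq> a"
    and "\<exists>Z\<in>C. a \<in> Z \<and> x \<in> Z \<and> p \<in> Z \<and> y \<in> Z"
    using pencil_touching_concyclic[OF K_pencil xK x_notin_abc D KD a_notin_D pD p_notin_abc
        \<open>p \<noteq> x\<close> ap] .
  then obtain Z where Z: "Z \<in> C" "a \<in> Z" "x \<in> Z" "p \<in> Z" "y \<in> Z"
    by blast
  have "Z = circ C a b x"
    using circle_eq_three_points[OF Z(1) circ_through(1)[OF ab bx ax] Z(2-4)]
      circ_through(2,4)[OF ab bx ax] p_on_abx \<open>p \<noteq> x\<close> \<open>a \<noteq> p\<close> \<open>a \<noteq> x\<close> by blast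
  then have "y \<in> circ C a b x"
    using Z(5) by simp
  moreover have "y \<in> circ C a b c"
    using M(3) by blast
  ultimately have "y = b"
    using circle_eq_three_points[OF circ_through(1)[OF ab bx ax] circ_through(1)[OF ab bc ac]]
      circ_through[OF ab bx ax] circ_through[OF ab bc ac] M(4) ab x_notin_abc
    by (metis par_refl)
  with M show thesis
    using that by blast
qed

lemma on_acx_if_on_D_par_b:
  assumes "v \<in> D" "par v b"
  shows "v \<in> circ C a c x"
proof -
  let ?A = "circ C a b c"
  have A: "?A \<in> C" "b \<in> ?A" "c \<in> ?A"
    using circ_through[OF ab bc ac] by simp_all
  obtain M where M: "M \<in> C" "M \<inter> D = {p}" "M \<inter> ?A = {b}"
    by (rule ex_touching_at_p_and_b)
  have "b \<notin> D"
  proof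
    assume "b \<in> D"
    with M(2,3) have "b = p"
      by blast
    with p_not_par(2) show False
      by simp
  qed
  with assms have "v \<notin> ?A" "v \<noteq> b"
    using par_on_circle_eq[OF A(1) _ A(2)] by blast+
  moreover have "v \<noteq> x" "\<not> par a v"
    using assms(2) ab bx par_trans par_commute by blast+
  ultimately obtain M' y where M': "M' \<in> C" "M' \<inter> D = {v}" "M' \<inter> ?A = {y}"
    and "\<exists>Z\<in>C. a \<in> Z \<and> x \<in> Z \<and> v \<in> Z \<and> y \<in> Z"
    using pencil_touching_concyclic[OF K_pencil xK x_notin_abc D KD a_notin_D assms(1)] by metis
  then obtain Z where Z: "Z \<in> C" "a \<in> Z" "x \<in> Z" "v \<in> Z" "y \<in> Z"
    by blast
  have "par p y"
    using touching_chain_par[OF M(1) D M'(1) A(1) M(2) _ M'(3) _ assms(2) \<open>v \<noteq> b\<close>] M'(2) M(3)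
    by (simp add: Int_commute)
  then have "y = c"
    using par_on_circle_eq[OF A(1) _ A(3)] M'(3) pc par_trans par_commute by blast
  then have "Z = circ C a c x"
    using circ_unique[OF ac cx ax Z(1,2)] Z(3,5) by simp
  with Z(4) show ?thesis
    by simp
qed

lemma circ_pqx_eq_D:
  assumes "par q b" "q \<in> circ C a c x"
  shows "circ C p q x = D"
proof -
  obtain v where "v \<in> D" "par v q"
    using ex_par_on_circle[OF D] .
  then have "v \<in> circ C a c x"
    using on_acx_if_on_D_par_b assms(1) par_trans by blast
  then have "v = q"
    using par_on_circle_eq[OF circ_through(1)[OF ac cx ax]] assms(2) \<open>par v q\<close> by blast
  moreover have "\<not> par p q" "\<not> par q x" "\<not> par p x"
    using assms(1) pc bc bx p_not_par(3) par_trans par_commute by blast+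
  moreover have "x \<in> D"
    using KD by blast
  ultimately show ?thesis
    using circ_unique[of p q x D] D pD \<open>v \<in> D\<close> by simp
qed

end

end

end

theorem theorem2p1:
  fixes C :: "'p set set" and par :: "'p \<Rightarrow> 'p \<Rightarrow> bool"
  assumes "laguerre_plane C par" and "axiom_C C" and "axiom_S C par"
    and "\<not> par a b" and "\<not> par a c" and "\<not> par a x"
    and "\<not> par b c" and "\<not> par b x" and "\<not> par c x"
    and "x \<notin> circ C a b c"
    and "par p c" and "p \<in> circ C a b x"
    and "par q b" and "q \<in> circ C a c x"
    and "K \<in> C" and "x \<in> K" and "K \<in> pencil C a (circ C a b c)"
  shows "K \<inter> circ C p q x = {x}"
proof -
  interpret laguerre_CS C par
    by unfold_locales (fact assms)+
  note configuration = assms(4-12,15-17)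
  obtain D where D: "D \<in> C" "p \<in> D" "K \<inter> D = {x}"
    using ex_touching_circle[OF assms(15,16) p_notin_K[OF configuration]]
      p_not_par(3)[OF configuration] by blast
  then have "circ C p q x = D"
    by (rule circ_pqx_eq_D[OF configuration _ _ _ assms(13,14)])
  with D(3) show ?thesis
    by simp
qed

end
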